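(* For every integer $N\ge 0$, let $T_{1\times 3}(5,N)$ be the number of tilings of a $5\times n$ rectangle, $n=3N/5$, by $N$ tiles of size $1\times 3$ (and $0$ if $3N/5\notin\mathbb{Z}$). Then, as formal power series, \[ \sum_{N\ge 0} T_{1\times 3}(5,N)\,z^N=\frac{(1-z^5)^2}{1-6z^5+3z^{10}-z^{15}}. \]
   Context: A tiling of an $m\times n$ rectangle (width $m$, length $n$, made of $mn$ unit squares) by $a\times b$ tiles is a partition of the rectangle into non-overlapping axis-parallel $a\times b$ rectangles with integer corner coordinates, each placed in either of its two orientations. Tilings related by reflections or rotations of the rectangle are counted as distinct. The empty tiling counts once for $N=0$. *)

theory Defs
  imports "HOL-Computational_Algebra.Formal_Power_Series"
begin

text \<open>Unit squares are indexed by their lower-left corner (x,y) in nat x nat.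
  The m x n rectangle (width m, length n) is the set of cells [0,m) x [0,n).\<close>

definition rect :: "nat \<Rightarrow> nat \<Rightarrow> (nat \<times> nat) set" where
  "rect m n = {0..<m} \<times> {0..<n}"

definition block :: "nat \<Rightarrow> nat \<Rightarrow> nat \<Rightarrow> nat \<Rightarrow> (nat \<times> nat) set" where
  "block x y p q = {x..<x+p} \<times> {y..<y+q}"

definition is_tile :: "nat \<Rightarrow> nat \<Rightarrow> (nat \<times> nat) set \<Rightarrow> bool" where
  "is_tile a b S \<longleftrightarrow> (\<exists>x y. S = block x y a b \<or> S = block x y b a)"

definition is_tiling :: "nat \<Rightarrow> nat \<Rightarrow> nat \<Rightarrow> nat \<Rightarrow> (nat \<times> nat) set set \<Rightarrow> bool" where
  "is_tiling m n a b \<T> \<longleftrightarrow>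
     (\<forall>S\<in>\<T>. is_tile a b S) \<and>
     (\<forall>S\<in>\<T>. \<forall>S'\<in>\<T>. S \<noteq> S' \<longrightarrow> S \<inter> S' = {}) \<and>
     \<Union>\<T> = rect m n"

definition num_tilings :: "nat \<Rightarrow> nat \<Rightarrow> nat \<Rightarrow> nat \<Rightarrow> nat" where
  "num_tilings m n a b = card {\<T>. is_tiling m n a b \<T>}"

definition T13_5 :: "nat \<Rightarrow> nat" where
  "T13_5 N = (if 5 dvd (3 * N) then card {\<T>. is_tiling 5 (3 * N div 5) 1 3 \<T> \<and> card \<T> = N} else 0)"

end

theory Submission
  imports Defs
begin

text \<open>Tile the strip of width 5 from the bottom up, always covering the lowest (then leftmost)
  uncovered cell; only two tiles can cover it. What remains is described by a profile of column
  heights, and translating by one row gives the same count. Up to this translation the profiles met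
  when tiling a 5 \<times> n rectangle fall into three families: the flat profile (rectangle count s),
  a trough of three columns of depth 2 (count A) and of depth 1 (count Y). Their counts satisfy
  s(n+3) = s(n) + A(n+2), A(n+5) = A(n+2) + Y(n+4) and Y(n+4) = Y(n+1) + 3 s(n+3), which eliminate to
  s(m+9) = 6 s(m+6) - 3 s(m+3) + s(m). Since a 5 \<times> 3k rectangle takes exactly 5k tiles, this is the
  stated denominator in z^5, and the numerator comes from s(0), s(3), s(6) = 1, 4, 22.\<close>

definition tilings :: "nat \<Rightarrow> nat \<Rightarrow> (nat \<times> nat) set \<Rightarrow> (nat \<times> nat) set set set" where
  "tilings a b S = {T. (\<forall>t\<in>T. is_tile a b t) \<and> pairwise disjnt T \<and> \<Union>T = S}"

lemma is_tiling_iff_tilings: "is_tiling m n a b T \<longleftrightarrow> T \<in> tilings a b (rect m n)"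
  by (auto simp: is_tiling_def tilings_def pairwise_def disjnt_def)

lemma finite_tile: "is_tile a b t \<Longrightarrow> finite t"
  by (auto simp: is_tile_def block_def)

lemma card_tile: "is_tile a b t \<Longrightarrow> card t = a * b"
  by (auto simp: is_tile_def block_def card_cartesian_product)

lemma tile_nonempty:
  assumes "0 < a" "0 < b" "is_tile a b t"
  shows "t \<noteq> {}"
proof -
  obtain x y where "t = block x y a b \<or> t = block x y b a"
    using assms(3) unfolding is_tile_def by blast
  then have "(x, y) \<in> t"
    using assms(1,2) by (auto simp: block_def)
  then show ?thesis by blast
qed

lemma finite_tilings: "finite S \<Longrightarrow> finite (tilings a b S)"
  by (rule finite_subset[of _ "Pow (Pow S)"]) (auto simp: tilings_def)

lemma tilings_empty:
  assumes "0 < a" "0 < b"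
  shows "tilings a b {} = {{}}"
proof -
  have "T = {}" if "T \<in> tilings a b {}" for T
    using that tile_nonempty[OF assms] by (auto simp: tilings_def)
  then show ?thesis by (auto simp: tilings_def)
qed

lemma card_tiling:
  assumes "finite S" "T \<in> tilings a b S"
  shows "card S = a * b * card T"
proof -
  have T: "\<forall>t\<in>T. is_tile a b t" "pairwise disjnt T" "\<Union>T = S"
    using assms(2) by (auto simp: tilings_def)
  have "card S = (\<Sum>t\<in>T. card t)"
    using card_Union_disjoint[OF T(2)] T(1,3) finite_tile by blast
  also have "\<dots> = (\<Sum>t\<in>T. a * b)"
    using T(1) by (intro sum.cong) (auto simp: card_tile)
  also have "\<dots> = a * b * card T"
    by simp
  finally show ?thesis .
qed

lemma card_tilings_containing:
  assumes "0 < a" "0 < b" "is_tile a b t" "t \<subseteq> S"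
  shows "card {T \<in> tilings a b S. t \<in> T} = card (tilings a b (S - t))"
proof (rule bij_betw_same_card[of "\<lambda>T. T - {t}"], rule bij_betw_byWitness[where f' = "insert t"])
  have "t \<notin> T" if "T \<in> tilings a b (S - t)" for T
    using that tile_nonempty[OF assms(1-3)] by (auto simp: tilings_def)
  then show "\<forall>T'\<in>tilings a b (S - t). insert t T' - {t} = T'" by blast
  show "insert t ` tilings a b (S - t) \<subseteq> {T \<in> tilings a b S. t \<in> T}"
  proof (rule image_subsetI)
    fix T assume T: "T \<in> tilings a b (S - t)"
    then have "disjnt t t'" if "t' \<in> T" for t'
      using that by (auto simp: tilings_def disjnt_def)
    then show "insert t T \<in> {T \<in> tilings a b S. t \<in> T}"
      using T assms(3,4) by (auto simp: tilings_def pairwise_insert disjnt_sym)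
  qed
  show "\<forall>T\<in>{T \<in> tilings a b S. t \<in> T}. insert t (T - {t}) = T" by blast
  show "(\<lambda>T. T - {t}) ` {T \<in> tilings a b S. t \<in> T} \<subseteq> tilings a b (S - t)"
  proof (rule image_subsetI)
    fix T assume "T \<in> {T \<in> tilings a b S. t \<in> T}"
    then show "T - {t} \<in> tilings a b (S - t)"
      unfolding tilings_def pairwise_def disjnt_def by blast
  qed
qed

lemma card_tilings_containing_if:
  assumes "0 < a" "0 < b" "is_tile a b t"
  shows "card {T \<in> tilings a b S. t \<in> T} = (if t \<subseteq> S then card (tilings a b (S - t)) else 0)"
proof (cases "t \<subseteq> S")
  case False
  then have "{T \<in> tilings a b S. t \<in> T} = {}"
    by (auto simp: tilings_def)
  with False show ?thesis by (metis card.empty)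
qed (simp add: card_tilings_containing[OF assms])

lemma tile_at_lowest_cell:
  assumes "is_tile a b t" "t \<subseteq> S" "(x, y) \<in> t"
    and lowest: "\<And>x' y'. (x', y') \<in> S \<Longrightarrow> y < y' \<or> (y = y' \<and> x \<le> x')"
  shows "t = block x y a b \<or> t = block x y b a"
proof -
  obtain x0 y0 p q where t: "t = block x0 y0 p q" and pq: "(p, q) = (a, b) \<or> (p, q) = (b, a)"
    using assms(1) unfolding is_tile_def by blast
  then have "(x0, y0) \<in> S"
    using assms(2,3) by (auto simp: block_def)
  then have "x0 = x \<and> y0 = y"
    using lowest assms(3) t by (fastforce simp: block_def)
  then show ?thesis
    using t pq by auto
qed

lemma card_tilings_lowest_cell:
  assumes "0 < a" "a < b" "finite S" "(x, y) \<in> S"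
    and lowest: "\<And>x' y'. (x', y') \<in> S \<Longrightarrow> y < y' \<or> (y = y' \<and> x \<le> x')"
  shows "card (tilings a b S) =
    (if block x y a b \<subseteq> S then card (tilings a b (S - block x y a b)) else 0) +
    (if block x y b a \<subseteq> S then card (tilings a b (S - block x y b a)) else 0)"
proof -
  define t1 t2 where "t1 = block x y a b" and "t2 = block x y b a"
  have tiles: "is_tile a b t1" "is_tile a b t2"
    unfolding t1_def t2_def is_tile_def by blast+
  have "t1 \<in> T \<or> t2 \<in> T" if "T \<in> tilings a b S" for T
  proof -
    obtain t where "t \<in> T" "(x, y) \<in> t"
      using \<open>T \<in> tilings a b S\<close> assms(4) by (auto simp: tilings_def)
    moreover have "is_tile a b t" "t \<subseteq> S"
      using that \<open>t \<in> T\<close> by (auto simp: tilings_def)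
    ultimately show ?thesis
      using tile_at_lowest_cell[OF _ _ _ lowest] unfolding t1_def t2_def by blast
  qed
  then have tilings_split: "tilings a b S = {T \<in> tilings a b S. t1 \<in> T} \<union> {T \<in> tilings a b S. t2 \<in> T}"
    by blast
  have "(x + a, y) \<in> t2 - t1" "(x, y) \<in> t1 \<inter> t2"
    using assms(1,2) by (auto simp: t1_def t2_def block_def)
  then have "\<not> (t1 \<in> T \<and> t2 \<in> T)" if "T \<in> tilings a b S" for T
    using that unfolding tilings_def pairwise_def disjnt_def by blast
  then have "card (tilings a b S) = card {T \<in> tilings a b S. t1 \<in> T} + card {T \<in> tilings a b S. t2 \<in> T}"
    using finite_tilings[OF assms(3)] by (subst tilings_split, intro card_Un_disjoint) auto
  then show ?thesis
    using card_tilings_containing_if[OF assms(1) _ tiles(1)] card_tilings_containing_if[OF assms(1) _ tiles(2)]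
      assms(1,2) unfolding t1_def t2_def by simp
qed

lemma image_apsnd_Suc_block: "apsnd Suc ` block x y p q = block x (Suc y) p q"
  unfolding block_def apsnd_def by (rule map_prod_surj_on) simp_all

lemma is_tile_image_apsnd_Suc:
  assumes "is_tile a b t"
  shows "is_tile a b (apsnd Suc ` t)"
proof -
  obtain x y where "t = block x y a b \<or> t = block x y b a"
    using assms unfolding is_tile_def by blast
  then have "apsnd Suc ` t = block x (Suc y) a b \<or> apsnd Suc ` t = block x (Suc y) b a"
    by (elim disjE) (simp_all add: image_apsnd_Suc_block)
  then show ?thesis
    unfolding is_tile_def by blast
qed

lemma tile_in_range_apsnd_Suc:
  assumes "is_tile a b t" "t \<subseteq> range (apsnd Suc)"
  shows "\<exists>t'. is_tile a b t' \<and> t = apsnd Suc ` t'"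
proof -
  obtain x y p q where t: "t = block x y p q" and pq: "(p, q) = (a, b) \<or> (p, q) = (b, a)"
    using assms(1) unfolding is_tile_def by blast
  show ?thesis
  proof (cases y)
    case 0
    then have "(x, y) \<notin> t"
      using assms(2) by auto
    then have "t = {}"
      by (auto simp: t block_def)
    then show ?thesis
      using assms(1) by auto
  next
    case (Suc y')
    then have "t = apsnd Suc ` block x y' p q"
      by (simp add: t image_apsnd_Suc_block)
    then show ?thesis
      using pq unfolding is_tile_def by blast
  qed
qed

lemma pairwise_disjnt_image_iff:
  assumes "inj f"
  shows "pairwise disjnt ((`) f ` A) \<longleftrightarrow> pairwise disjnt A"
  using assms by (auto simp: pairwise_image pairwise_def disjnt_def inj_image_eq_iff image_Int[symmetric])

lemma card_tilings_apsnd_Suc: "card (tilings a b (apsnd Suc ` S)) = card (tilings a b S)"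
proof -
  let ?sh = "apsnd Suc :: nat \<times> nat \<Rightarrow> nat \<times> nat"
  have inj: "inj ?sh"
    by (auto simp: inj_def)
  have "(`) ((`) ?sh) ` tilings a b S = tilings a b (?sh ` S)"
  proof
    show "(`) ((`) ?sh) ` tilings a b S \<subseteq> tilings a b (?sh ` S)"
    proof (rule image_subsetI)
      fix T assume "T \<in> tilings a b S"
      then have "\<forall>t\<in>T. is_tile a b t" "pairwise disjnt T" "\<Union>T = S"
        by (simp_all add: tilings_def)
      then show "(`) ?sh ` T \<in> tilings a b (?sh ` S)"
        unfolding tilings_def using is_tile_image_apsnd_Suc
        by (simp add: pairwise_disjnt_image_iff[OF inj] image_Union[symmetric])
    qed
  next
    show "tilings a b (?sh ` S) \<subseteq> (`) ((`) ?sh) ` tilings a b S"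
    proof
      fix T assume T: "T \<in> tilings a b (?sh ` S)"
      define T' where "T' = {t'. is_tile a b t' \<and> ?sh ` t' \<in> T}"
      have "t \<in> (`) ?sh ` T'" if "t \<in> T" for t
      proof -
        have "is_tile a b t" "t \<subseteq> ?sh ` S"
          using T that by (auto simp: tilings_def)
        then obtain t' where "is_tile a b t'" "t = ?sh ` t'"
          using tile_in_range_apsnd_Suc by blast
        then show ?thesis
          using that by (auto simp: T'_def)
      qed
      then have image: "(`) ?sh ` T' = T"
        by (auto simp: T'_def)
      have "?sh ` \<Union>T' = ?sh ` S"
        using T by (simp add: tilings_def image_Union image)
      then have "\<Union>T' = S"
        using inj by (simp add: inj_image_eq_iff)
      moreover have "pairwise disjnt T'"
        using T by (simp add: tilings_def image[symmetric] pairwise_disjnt_image_iff[OF inj])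
      ultimately have "T' \<in> tilings a b S"
        by (simp add: T'_def tilings_def)
      with image show "T \<in> (`) ((`) ?sh) ` tilings a b S"
        by blast
    qed
  qed
  then show ?thesis
    using inj by (metis card_image inj_on_image inj_on_subset subset_UNIV)
qed

text \<open>Column x is already covered up to height h ! x; the rest of the strip of length n is open.\<close>

definition profile_region :: "nat list \<Rightarrow> nat \<Rightarrow> (nat \<times> nat) set" where
  "profile_region h n = {(x, y). x < length h \<and> h ! x \<le> y \<and> y < n}"

definition num_profile_tilings :: "nat list \<Rightarrow> nat \<Rightarrow> nat" where
  "num_profile_tilings h n = card (tilings 1 3 (profile_region h n))"

definition first_zero :: "nat list \<Rightarrow> nat" where
  "first_zero h = length (takeWhile (\<lambda>v. v \<noteq> 0) h)"

lemma finite_profile_region: "finite (profile_region h n)"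
  by (rule finite_subset[of _ "{..<length h} \<times> {..<n}"]) (auto simp: profile_region_def)

lemma num_profile_tilings_0 [simp]: "num_profile_tilings h 0 = 1"
  by (simp add: num_profile_tilings_def profile_region_def tilings_empty)

lemma num_profile_tilings_lower:
  assumes "0 \<notin> set h" "0 < n"
  shows "num_profile_tilings h n = num_profile_tilings (map (\<lambda>v. v - 1) h) (n - 1)"
proof -
  have "profile_region h n = apsnd Suc ` profile_region (map (\<lambda>v. v - 1) h) (n - 1)"
  proof (rule set_eqI)
    fix p :: "nat \<times> nat"
    obtain x y where p: "p = (x, y)" by fastforce
    show "p \<in> profile_region h n \<longleftrightarrow> p \<in> apsnd Suc ` profile_region (map (\<lambda>v. v - 1) h) (n - 1)"
      using assms by (cases y) (auto simp: p profile_region_def image_iff in_set_conv_nth)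
  qed
  then show ?thesis
    by (simp add: num_profile_tilings_def card_tilings_apsnd_Suc)
qed

lemma first_zero_nth: "first_zero h < length h \<Longrightarrow> h ! first_zero h = 0"
  unfolding first_zero_def using nth_length_takeWhile by fastforce

lemma nth_before_first_zero: "x < first_zero h \<Longrightarrow> h ! x \<noteq> 0"
  unfolding first_zero_def by (metis (mono_tags, lifting) nth_mem set_takeWhileD takeWhile_nth)

lemma num_profile_tilings_first_zero:
  assumes "first_zero h < length h" "0 < n"
  defines "i \<equiv> first_zero h"
  shows "num_profile_tilings h n =
    (if 3 \<le> n then num_profile_tilings (h[i := 3]) n else 0) +
    (if i + 2 < length h \<and> h ! (i + 1) = 0 \<and> h ! (i + 2) = 0
     then num_profile_tilings (h[i := 1, i + 1 := 1, i + 2 := 1]) n else 0)"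
proof -
  have hi: "h ! i = 0" "i < length h"
    using first_zero_nth assms by auto
  have lowest: "0 < y \<or> (0 = y \<and> i \<le> x)" if "(x, y) \<in> profile_region h n" for x y
    using that nth_before_first_zero[of x h] by (cases y) (auto simp: profile_region_def i_def not_less[symmetric])
  have "block i 0 1 3 \<subseteq> profile_region h n \<longleftrightarrow> 3 \<le> n"
    using hi by (auto simp: block_def profile_region_def subset_iff dest: spec[of _ 2])
  moreover have "profile_region h n - block i 0 1 3 = profile_region (h[i := 3]) n"
    using hi by (auto simp: block_def profile_region_def nth_list_update split: if_splits)
  moreover have
    "block i 0 3 1 \<subseteq> profile_region h n \<longleftrightarrow> i + 2 < length h \<and> h ! (i + 1) = 0 \<and> h ! (i + 2) = 0"
    using hi assms(2) by (auto simp: block_def profile_region_def subset_iff less_Suc_eq numeral_3_eq_3)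
  moreover have "profile_region h n - block i 0 3 1 = profile_region (h[i := 1, i + 1 := 1, i + 2 := 1]) n"
    if "i + 2 < length h \<and> h ! (i + 1) = 0 \<and> h ! (i + 2) = 0"
    using that hi by (auto simp: block_def profile_region_def nth_list_update split: if_splits)
  ultimately show ?thesis
    using card_tilings_lowest_cell[of 1 3, OF _ _ finite_profile_region, of i 0 h n] hi assms(2) lowest
    by (simp add: num_profile_tilings_def profile_region_def)
qed

lemma num_profile_tilings_tall:
  "first_zero h < length h \<Longrightarrow> 3 \<le> n \<Longrightarrow> num_profile_tilings h n =
    num_profile_tilings (h[first_zero h := 3]) n +
    (if first_zero h + 2 < length h \<and> h ! (first_zero h + 1) = 0 \<and> h ! (first_zero h + 2) = 0
     then num_profile_tilings (h[first_zero h := 1, first_zero h + 1 := 1, first_zero h + 2 := 1]) n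
     else 0)"
  by (simp add: num_profile_tilings_first_zero)

lemma num_profile_tilings_short:
  "first_zero h < length h \<Longrightarrow> 0 < n \<Longrightarrow> n < 3 \<Longrightarrow> num_profile_tilings h n =
    (if first_zero h + 2 < length h \<and> h ! (first_zero h + 1) = 0 \<and> h ! (first_zero h + 2) = 0
     then num_profile_tilings (h[first_zero h := 1, first_zero h + 1 := 1, first_zero h + 2 := 1]) n
     else 0)"
  by (simp add: num_profile_tilings_first_zero)

text \<open>Simplifying with these rules unfolds the recursion on a concrete profile as long as the length
  is known to be at least 3 (or positive, once the bottom row is covered); both sides of each
  recurrence below then reduce to the same combination of counts.\<close>

lemmas num_profile_tilings_eval =
  num_profile_tilings_lower num_profile_tilings_tall num_profile_tilings_short first_zero_def

definition strip_tilings :: "nat \<Rightarrow> nat" where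
  "strip_tilings n = num_profile_tilings [0, 0, 0, 0, 0] n"

definition trough_tilings :: "nat \<Rightarrow> nat \<Rightarrow> nat" where
  "trough_tilings d n = num_profile_tilings [d, d, 0, 0, 0] n + num_profile_tilings [d, 0, 0, 0, d] n +
    num_profile_tilings [0, 0, 0, d, d] n"

lemma strip_tilings_step: "strip_tilings (n + 3) = strip_tilings n + trough_tilings 2 (n + 2)"
  by (simp add: strip_tilings_def trough_tilings_def num_profile_tilings_eval)

lemma trough_tilings_2_step: "trough_tilings 2 (n + 5) = trough_tilings 2 (n + 2) + trough_tilings 1 (n + 4)"
  by (simp add: strip_tilings_def trough_tilings_def num_profile_tilings_eval)

lemma trough_tilings_1_step: "trough_tilings 1 (n + 4) = trough_tilings 1 (n + 1) + 3 * strip_tilings (n + 3)"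
  by (simp add: strip_tilings_def trough_tilings_def num_profile_tilings_eval)

lemma strip_tilings_initial: "strip_tilings 0 = 1" "strip_tilings 3 = 4" "strip_tilings 6 = 22"
  by (simp_all add: strip_tilings_def num_profile_tilings_eval)

lemma strip_tilings_recurrence:
  "strip_tilings (m + 9) + 3 * strip_tilings (m + 3) = 6 * strip_tilings (m + 6) + strip_tilings m"
proof -
  have "strip_tilings (m + 9) = strip_tilings (m + 6) + trough_tilings 2 (m + 8)"
    using strip_tilings_step[of "m + 6"] by (simp add: ac_simps)
  moreover have "strip_tilings (m + 6) = strip_tilings (m + 3) + trough_tilings 2 (m + 5)"
    using strip_tilings_step[of "m + 3"] by (simp add: ac_simps)
  moreover have "strip_tilings (m + 3) = strip_tilings m + trough_tilings 2 (m + 2)"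
    by (rule strip_tilings_step)
  moreover have "trough_tilings 2 (m + 8) = trough_tilings 2 (m + 5) + trough_tilings 1 (m + 7)"
    using trough_tilings_2_step[of "m + 3"] by (simp add: ac_simps)
  moreover have "trough_tilings 2 (m + 5) = trough_tilings 2 (m + 2) + trough_tilings 1 (m + 4)"
    by (rule trough_tilings_2_step)
  moreover have "trough_tilings 1 (m + 7) = trough_tilings 1 (m + 4) + 3 * strip_tilings (m + 6)"
    using trough_tilings_1_step[of "m + 3"] by (simp add: ac_simps)
  ultimately show ?thesis
    by linarith
qed

lemma rect_eq_profile_region: "rect 5 n = profile_region [0, 0, 0, 0, 0] n"
  by (auto simp: rect_def profile_region_def less_Suc_eq numeral_eq_Suc nth_Cons split: nat.splits)

lemma T13_5_eq_strip_tilings: "T13_5 N = (if 5 dvd N then strip_tilings (3 * (N div 5)) else 0)"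
proof (cases "5 dvd N")
  case True
  then obtain k where N: "N = 5 * k" by blast
  have "card T = N" if "T \<in> tilings 1 3 (rect 5 (3 * k))" for T
    using card_tiling[OF _ that] N by (simp add: rect_def card_cartesian_product)
  then have "{T. is_tiling 5 (3 * k) 1 3 T \<and> card T = N} = tilings 1 3 (rect 5 (3 * k))"
    by (auto simp: is_tiling_iff_tilings)
  then show ?thesis
    using N by (simp add: T13_5_def strip_tilings_def num_profile_tilings_def rect_eq_profile_region)
next
  case False
  then have "\<not> 5 dvd 3 * N" by presburger
  with False show ?thesis by (simp add: T13_5_def)
qed

lemma T13_5_recurrence: "T13_5 (N + 15) + 3 * T13_5 (N + 5) = 6 * T13_5 (N + 10) + T13_5 N"
proof (cases "5 dvd N")
  case True
  then obtain k where "N = 5 * k" by blast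
  then show ?thesis
    using strip_tilings_recurrence[of "3 * k"]
    by (simp add: T13_5_eq_strip_tilings algebra_simps)
qed (simp add: T13_5_eq_strip_tilings dvd_add_left_iff)

lemma T13_5_initial:
  assumes "N < 15"
  shows "T13_5 N = (if N = 0 then 1 else if N = 5 then 4 else if N = 10 then 22 else 0)"
proof (cases "5 dvd N")
  case True
  then obtain k where "N = 5 * k" by blast
  with assms have "N = 0 \<and> k = 0 \<or> N = 5 \<and> k = 1 \<or> N = 10 \<and> k = 2" by presburger
  then show ?thesis
    by (auto simp: T13_5_eq_strip_tilings strip_tilings_initial)
qed (auto simp: T13_5_eq_strip_tilings intro!: gr0I)

lemma fps_T13_5_times_denominator:
  "Abs_fps (\<lambda>N. of_nat (T13_5 N) :: 'a :: comm_ring_1) * (1 - 6 * fps_X ^ 5 + 3 * fps_X ^ 10 - fps_X ^ 15) =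
    (1 - fps_X ^ 5)\<^sup>2"
proof (rule fps_ext)
  fix N
  let ?A = "Abs_fps (\<lambda>N. of_nat (T13_5 N) :: 'a)"
  let ?t = "\<lambda>N. of_nat (T13_5 N) :: 'a"
  have "?A * (1 - 6 * fps_X ^ 5 + 3 * fps_X ^ 10 - fps_X ^ 15) =
      ?A - fps_const 6 * (?A * fps_X ^ 5) + fps_const 3 * (?A * fps_X ^ 10) - ?A * fps_X ^ 15"
    by (simp add: algebra_simps numeral_fps_const)
  then have lhs: "fps_nth (?A * (1 - 6 * fps_X ^ 5 + 3 * fps_X ^ 10 - fps_X ^ 15)) N =
      ?t N - 6 * (if N < 5 then 0 else ?t (N - 5)) + 3 * (if N < 10 then 0 else ?t (N - 10)) -
      (if N < 15 then 0 else ?t (N - 15))"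
    by (simp add: fps_X_power_mult_right_nth)
  have "((1 - fps_X ^ 5)\<^sup>2 :: 'a fps) = 1 - fps_const 2 * fps_X ^ 5 + fps_X ^ 10"
    by (simp add: power2_eq_square algebra_simps numeral_fps_const power_add[symmetric])
  then have rhs: "fps_nth ((1 - fps_X ^ 5)\<^sup>2 :: 'a fps) N =
      (if N = 0 then 1 else 0) - 2 * (if N = 5 then 1 else 0) + (if N = 10 then 1 else 0)"
    by simp
  show "fps_nth (?A * (1 - 6 * fps_X ^ 5 + 3 * fps_X ^ 10 - fps_X ^ 15)) N = fps_nth ((1 - fps_X ^ 5)\<^sup>2) N"
  proof (cases "N < 15")
    case True
    then show ?thesis
      unfolding lhs rhs using T13_5_initial[of N] T13_5_initial[of "N - 5"] T13_5_initial[of "N - 10"]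
      by auto
  next
    case False
    then obtain M where N: "N = M + 15"
      by (metis add.commute le_Suc_ex not_less)
    have "?t (M + 15) + 3 * ?t (M + 5) = 6 * ?t (M + 10) + ?t M"
      using arg_cong[OF T13_5_recurrence[of M], of "of_nat :: nat \<Rightarrow> 'a"] by simp
    then have "?t N - 6 * ?t (N - 5) + 3 * ?t (N - 10) - ?t (N - 15) = 0"
      unfolding N by (simp add: algebra_simps)
    with False show ?thesis
      unfolding lhs rhs by simp
  qed
qed

theorem mainTheorem2:
  shows "Abs_fps (\<lambda>N. of_nat (T13_5 N) :: rat) =
    (1 - fps_X ^ 5)\<^sup>2 / (1 - 6 * fps_X ^ 5 + 3 * fps_X ^ 10 - fps_X ^ 15)"
proof -
  let ?D = "1 - 6 * fps_X ^ 5 + 3 * fps_X ^ 10 - fps_X ^ 15 :: rat fps"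
  have "fps_nth ?D 0 \<noteq> 0"
    by simp
  then have "?D \<noteq> 0"
    by (metis fps_zero_nth)
  then show ?thesis
    using fps_T13_5_times_denominator[where 'a = rat] by (metis fps_divide_times_eq)
qed

end
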